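(* Let $\mathcal{R}$ be a left-connected rewriting system over a signature $\Sigma$, let $\rho_1 = (L_1 \leftarrow I_1+O_1 \rightarrow R_1)$ and $\rho_2 = (L_2 \leftarrow I_2+O_2 \rightarrow R_2)$ be rules of $\mathcal{R}$, and let $(g_1, g_2 \colon G \to L_1 + L_2)$ be a gluing scheme. If two distinct nodes that both belong to $L_1$ (respectively, both belong to $L_2$) are glued, then the gluing scheme does not yield a pre-critical pair. Likewise, if two distinct hyperedges that both belong to $L_1$ (respectively, both belong to $L_2$) are glued, then the gluing scheme does not yield a pre-critical pair.
   Context: A signature $\Sigma$ is a set of triples $(x,n,m)$ (label $x$, arity $n$, coarity $m$). A $\Sigma$-hypergraph $G=(V,E,s,t,l)$ consists of finite sets $V$ (nodes) and $E$ (hyperedges), maps $s,t\colon E\to V^*$ (lists of source and target nodes) and a labelling $l\colon E\to\Sigma$ sending a hyperedge with $n$ sources and $m$ targets to a triple of the form $(x,n,m)$. A morphism $f=(f_V,f_E)$ of $\Sigma$-hypergraphs satisfies $f_V^*\circ s = s'\circ f_E$, $f_V^*\circ t=t'\circ f_E$, $l = l'\circ f_E$. These form the category $\mathbf{Hyp}_\Sigma$ (a presheaf category: colimits are computed componentwise on nodes and hyperedges, monos/epis are injective/surjective on both components). Composition of $f\colon A\to B$, $g\colon B\to C$ is written $f;g$; $\iota_1,\iota_2$ are coproduct coprojections. A hypergraph is discrete if it has no hyperedges. A path is a list of hyperedges $[e_1,\dots,e_n]$ such that for each $k$ some target of $e_k$ is a source of $e_{k+1}$; it goes from node $v$ to node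 $v'$ if $v$ is a source of $e_1$ and $v'$ a target of $e_n$; a cycle is a path in which some source of $e_1$ is a target of $e_n$. The in-degree (out-degree) of a node $v$ is the number of pairs $(e,i)$ with $v$ the $i$-th target (source) of $e$; $in(H)$ and $out(H)$ are the sets of nodes of in-degree $0$ and out-degree $0$. $H$ is monogamous acyclic (ma) if it has no cycle and every node has in- and out-degree at most $1$. A cospan $I\xrightarrow{f} H\xleftarrow{g} O$ with $I,O$ discrete is an ma-cospan if $H$ is ma, $f$ is mono with image $in(H)$ and $g$ is mono with image $out(H)$. $H$ is strongly connected if for every $x\in in(H)$, $y\in out(H)$ there is a path from $x$ to $y$. A left-connected rule is a span $L\xleftarrow{[i_L,o_L]} I+O\xrightarrow{[i_R,o_R]} R$ with $I,O$ discrete, $I\xrightarrow{i_L}L\xleftarrow{o_L}O$ and $I\xrightarrow{i_R}R\xleftarrow{o_R}O$ ma-cospans, $[i_L,o_L]$ mono, and $L$ strongly connected; a left-connected rewriting system is a finite set of such rules. A morphism $m\colon L\to G$ is a convex match if it is mono and for any nodes $v,v'$ of $m(L)$ and any path from $v$ to $v'$ in $G$, all hyperedges of the path lie in $m(L)$. A derivation $(n\to G\leftarrow m)\Rrightarrow(n\to H\leftarrow m)$ between ma-cospans via a rule $L\leftarrow K\rightarrow R$ ($K=I+O$) consists of a convex match $L\to G$, a hypergraph $C$ and morphisms $K\to C$, $C\to G$, $C\to H$, $R\to H$, $n+m\to C$ such that $K,L,C,G$ form a pushout square (required also to be a so-called boundary complement), $K,R,C,H$ form a pushout square, and everything commutes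 with the interface maps $n+m\to G$, $n+m\to H$. For left-connected systems it is known that the boundary complement condition is automatic, every mono match is convex, and the pushout complement $C$ exists uniquely for every mono match. Given rules $L_1\leftarrow K_1\to R_1$ and $L_2\leftarrow K_2\to R_2$, a pre-critical pair is a pair of derivations from a common ma-cospan $n\to S\leftarrow m$ with matches $m_1\colon L_1\to S$, $m_2\colon L_2\to S$ such that $[m_1,m_2]\colon L_1+L_2\to S$ is epi. A gluing scheme for $\Sigma$-hypergraphs $L_1,L_2$ is a $\Sigma$-hypergraph $G$ with two morphisms $g_1,g_2\colon G\to L_1+L_2$; its gluing is the coequaliser $\epsilon\colon L_1+L_2\to S:=\mathtt{coeq}(g_1,g_2)$. Two nodes (or two hyperedges) $x,x'$ of $L_1+L_2$ are glued if there is a node (or hyperedge) $y$ of $G$ with $g_1(y)=x$ and $g_2(y)=x'$. The gluing scheme yields a pre-critical pair (for rules with left-hand sides $L_1,L_2$) if the cospan $L_1+L_2\xrightarrow{\epsilon} S\xleftarrow{[\subseteq,\subseteq]} in(S)+out(S)$ determines one, i.e. $\iota_1;\epsilon$ and $\iota_2;\epsilon$ are mono matches and $in(S)\xrightarrow{\subseteq}S\xleftarrow{\subseteq}out(S)$ is an ma-cospan, the two derivations from this ma-cospan being the (unique) ones with matches $\iota_1;\epsilon$ and $\iota_2;\epsilon$. *)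

theory Defs
  imports Main
begin

text \<open>The labelling of an edge e is the triple (lbl e, length (src e), length (tgt e)),
  which is required to lie in the signature Sigma.\<close>

record ('v, 'e, 'x) hgraph =
  nodes :: "'v set"
  edges :: "'e set"
  src :: "'e \<Rightarrow> 'v list"
  tgt :: "'e \<Rightarrow> 'v list"
  lbl :: "'e \<Rightarrow> 'x"

type_synonym 'x signature = "('x \<times> nat \<times> nat) set"

definition wf_hgraph :: "'x signature \<Rightarrow> ('v, 'e, 'x) hgraph \<Rightarrow> bool" where
  "wf_hgraph Sig G \<longleftrightarrow> finite (nodes G) \<and> finite (edges G) \<and>
     (\<forall>e\<in>edges G. set (src G e) \<subseteq> nodes G \<and> set (tgt G e) \<subseteq> nodes G \<and>
        (lbl G e, length (src G e), length (tgt G e)) \<in> Sig)"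

type_synonym ('v1, 'e1, 'v2, 'e2) hmorph = "('v1 \<Rightarrow> 'v2) \<times> ('e1 \<Rightarrow> 'e2)"

definition hom :: "('v1, 'e1, 'x) hgraph \<Rightarrow> ('v2, 'e2, 'x) hgraph
    \<Rightarrow> ('v1, 'e1, 'v2, 'e2) hmorph \<Rightarrow> bool" where
  "hom G H f \<longleftrightarrow> fst f ` nodes G \<subseteq> nodes H \<and> snd f ` edges G \<subseteq> edges H \<and>
     (\<forall>e\<in>edges G. map (fst f) (src G e) = src H (snd f e) \<and>
                   map (fst f) (tgt G e) = tgt H (snd f e) \<and>
                   lbl H (snd f e) = lbl G e)"

definition mono_hom :: "('v1, 'e1, 'x) hgraph \<Rightarrow> ('v2, 'e2, 'x) hgraph
    \<Rightarrow> ('v1, 'e1, 'v2, 'e2) hmorph \<Rightarrow> bool" where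
  "mono_hom G H f \<longleftrightarrow> hom G H f \<and> inj_on (fst f) (nodes G) \<and> inj_on (snd f) (edges G)"

definition hcomp :: "('v1, 'e1, 'v2, 'e2) hmorph \<Rightarrow> ('v2, 'e2, 'v3, 'e3) hmorph
    \<Rightarrow> ('v1, 'e1, 'v3, 'e3) hmorph" (infixl ";;" 70) where
  "f ;; g = (fst g \<circ> fst f, snd g \<circ> snd f)"

definition discrete :: "('v, 'e, 'x) hgraph \<Rightarrow> bool" where
  "discrete G \<longleftrightarrow> edges G = {}"

definition hcoprod :: "('v1, 'e1, 'x) hgraph \<Rightarrow> ('v2, 'e2, 'x) hgraph
    \<Rightarrow> ('v1 + 'v2, 'e1 + 'e2, 'x) hgraph" where
  "hcoprod G H = \<lparr> nodes = Inl ` nodes G \<union> Inr ` nodes H,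
                   edges = Inl ` edges G \<union> Inr ` edges H,
                   src = case_sum (\<lambda>e. map Inl (src G e)) (\<lambda>e. map Inr (src H e)),
                   tgt = case_sum (\<lambda>e. map Inl (tgt G e)) (\<lambda>e. map Inr (tgt H e)),
                   lbl = case_sum (lbl G) (lbl H) \<rparr>"

definition inj1 :: "('v1, 'e1, 'v1 + 'v2, 'e1 + 'e2) hmorph" where
  "inj1 = (Inl, Inl)"

definition inj2 :: "('v2, 'e2, 'v1 + 'v2, 'e1 + 'e2) hmorph" where
  "inj2 = (Inr, Inr)"

definition indeg :: "('v, 'e, 'x) hgraph \<Rightarrow> 'v \<Rightarrow> nat" where
  "indeg G v = card {(e, i). e \<in> edges G \<and> i < length (tgt G e) \<and> tgt G e ! i = v}"

definition outdeg :: "('v, 'e, 'x) hgraph \<Rightarrow> 'v \<Rightarrow> nat" where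
  "outdeg G v = card {(e, i). e \<in> edges G \<and> i < length (src G e) \<and> src G e ! i = v}"

definition in_nodes :: "('v, 'e, 'x) hgraph \<Rightarrow> 'v set" where
  "in_nodes G = {v \<in> nodes G. indeg G v = 0}"

definition out_nodes :: "('v, 'e, 'x) hgraph \<Rightarrow> 'v set" where
  "out_nodes G = {v \<in> nodes G. outdeg G v = 0}"

definition is_path :: "('v, 'e, 'x) hgraph \<Rightarrow> 'e list \<Rightarrow> bool" where
  "is_path G es \<longleftrightarrow> es \<noteq> [] \<and> set es \<subseteq> edges G \<and>
     (\<forall>k. Suc k < length es \<longrightarrow> (\<exists>v. v \<in> set (tgt G (es ! k)) \<and> v \<in> set (src G (es ! Suc k))))"

definition path_from_to :: "('v, 'e, 'x) hgraph \<Rightarrow> 'e list \<Rightarrow> 'v \<Rightarrow> 'v \<Rightarrow> bool" where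
  "path_from_to G es v v' \<longleftrightarrow> is_path G es \<and> v \<in> set (src G (hd es)) \<and> v' \<in> set (tgt G (last es))"

definition is_cycle :: "('v, 'e, 'x) hgraph \<Rightarrow> 'e list \<Rightarrow> bool" where
  "is_cycle G es \<longleftrightarrow> is_path G es \<and> (\<exists>v. v \<in> set (src G (hd es)) \<and> v \<in> set (tgt G (last es)))"

definition monogamous_acyclic :: "('v, 'e, 'x) hgraph \<Rightarrow> bool" where
  "monogamous_acyclic H \<longleftrightarrow> (\<nexists>es. is_cycle H es) \<and>
     (\<forall>v\<in>nodes H. indeg H v \<le> 1 \<and> outdeg H v \<le> 1)"

definition ma_cospan :: "('v1, 'e1, 'x) hgraph \<Rightarrow> ('v1, 'e1, 'v, 'e) hmorph \<Rightarrow> ('v, 'e, 'x) hgraph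
    \<Rightarrow> ('v2, 'e2, 'v, 'e) hmorph \<Rightarrow> ('v2, 'e2, 'x) hgraph \<Rightarrow> bool" where
  "ma_cospan I f H g Ob \<longleftrightarrow> discrete I \<and> discrete Ob \<and> monogamous_acyclic H \<and>
     mono_hom I H f \<and> fst f ` nodes I = in_nodes H \<and>
     mono_hom Ob H g \<and> fst g ` nodes Ob = out_nodes H"

definition strongly_connected :: "('v, 'e, 'x) hgraph \<Rightarrow> bool" where
  "strongly_connected H \<longleftrightarrow>
     (\<forall>x\<in>in_nodes H. \<forall>y\<in>out_nodes H. \<exists>es. path_from_to H es x y)"

text \<open>A rule L <- I+O -> R, given by its four hypergraphs and the four legs
  i_L, o_L, i_R, o_R (the copairings [i_L,o_L], [i_R,o_R] are the span legs).\<close>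
record ('v, 'e, 'x) rule =
  lhs :: "('v, 'e, 'x) hgraph"
  rI :: "('v, 'e, 'x) hgraph"
  rO :: "('v, 'e, 'x) hgraph"
  rhs :: "('v, 'e, 'x) hgraph"
  iL :: "('v, 'e, 'v, 'e) hmorph"
  oL :: "('v, 'e, 'v, 'e) hmorph"
  iR :: "('v, 'e, 'v, 'e) hmorph"
  oR :: "('v, 'e, 'v, 'e) hmorph"

definition copair :: "('v1, 'e1, 'v, 'e) hmorph \<Rightarrow> ('v2, 'e2, 'v, 'e) hmorph
    \<Rightarrow> ('v1 + 'v2, 'e1 + 'e2, 'v, 'e) hmorph" where
  "copair f g = (case_sum (fst f) (fst g), case_sum (snd f) (snd g))"

definition left_connected_rule :: "'x signature \<Rightarrow> ('v, 'e, 'x) rule \<Rightarrow> bool" where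
  "left_connected_rule Sig r \<longleftrightarrow>
     wf_hgraph Sig (lhs r) \<and> wf_hgraph Sig (rI r) \<and> wf_hgraph Sig (rO r) \<and> wf_hgraph Sig (rhs r) \<and>
     discrete (rI r) \<and> discrete (rO r) \<and>
     ma_cospan (rI r) (iL r) (lhs r) (oL r) (rO r) \<and>
     ma_cospan (rI r) (iR r) (rhs r) (oR r) (rO r) \<and>
     mono_hom (hcoprod (rI r) (rO r)) (lhs r) (copair (iL r) (oL r)) \<and>
     hom (hcoprod (rI r) (rO r)) (rhs r) (copair (iR r) (oR r)) \<and>
     strongly_connected (lhs r)"

definition left_connected_system :: "'x signature \<Rightarrow> ('v, 'e, 'x) rule set \<Rightarrow> bool" where
  "left_connected_system Sig RS \<longleftrightarrow> finite RS \<and> (\<forall>r\<in>RS. left_connected_rule Sig r)"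

definition gluing_scheme :: "'x signature \<Rightarrow> ('w, 'f, 'x) hgraph \<Rightarrow> ('v, 'e, 'x) hgraph
    \<Rightarrow> ('v, 'e, 'x) hgraph \<Rightarrow> ('w, 'f, 'v + 'v, 'e + 'e) hmorph
    \<Rightarrow> ('w, 'f, 'v + 'v, 'e + 'e) hmorph \<Rightarrow> bool" where
  "gluing_scheme Sig G L1 L2 g1 g2 \<longleftrightarrow> wf_hgraph Sig G \<and>
     hom G (hcoprod L1 L2) g1 \<and> hom G (hcoprod L1 L2) g2"

definition equiv_gen :: "'a set \<Rightarrow> ('a \<times> 'a) set \<Rightarrow> ('a \<times> 'a) set" where
  "equiv_gen A R = Id_on A \<union> (R \<union> R\<inverse>)\<^sup>+"

definition glue_node_rel :: "('w, 'f, 'x) hgraph \<Rightarrow> ('v, 'e, 'x) hgraph \<Rightarrow> ('v, 'e, 'x) hgraph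
    \<Rightarrow> ('w, 'f, 'v + 'v, 'e + 'e) hmorph \<Rightarrow> ('w, 'f, 'v + 'v, 'e + 'e) hmorph
    \<Rightarrow> (('v + 'v) \<times> ('v + 'v)) set" where
  "glue_node_rel G L1 L2 g1 g2 =
     equiv_gen (nodes (hcoprod L1 L2)) {(fst g1 y, fst g2 y) | y. y \<in> nodes G}"

definition glue_edge_rel :: "('w, 'f, 'x) hgraph \<Rightarrow> ('v, 'e, 'x) hgraph \<Rightarrow> ('v, 'e, 'x) hgraph
    \<Rightarrow> ('w, 'f, 'v + 'v, 'e + 'e) hmorph \<Rightarrow> ('w, 'f, 'v + 'v, 'e + 'e) hmorph
    \<Rightarrow> (('e + 'e) \<times> ('e + 'e)) set" where
  "glue_edge_rel G L1 L2 g1 g2 =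
     equiv_gen (edges (hcoprod L1 L2)) {(snd g1 y, snd g2 y) | y. y \<in> edges G}"

definition glue_map :: "('w, 'f, 'x) hgraph \<Rightarrow> ('v, 'e, 'x) hgraph \<Rightarrow> ('v, 'e, 'x) hgraph
    \<Rightarrow> ('w, 'f, 'v + 'v, 'e + 'e) hmorph \<Rightarrow> ('w, 'f, 'v + 'v, 'e + 'e) hmorph
    \<Rightarrow> ('v + 'v, 'e + 'e, ('v + 'v) set, ('e + 'e) set) hmorph" where
  "glue_map G L1 L2 g1 g2 =
     (\<lambda>v. glue_node_rel G L1 L2 g1 g2 `` {v}, \<lambda>e. glue_edge_rel G L1 L2 g1 g2 `` {e})"

text \<open>Sources, targets and labels of an edge class are taken from any representative
  (well defined since g1, g2 are morphisms).\<close>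
definition gluing :: "('w, 'f, 'x) hgraph \<Rightarrow> ('v, 'e, 'x) hgraph \<Rightarrow> ('v, 'e, 'x) hgraph
    \<Rightarrow> ('w, 'f, 'v + 'v, 'e + 'e) hmorph \<Rightarrow> ('w, 'f, 'v + 'v, 'e + 'e) hmorph
    \<Rightarrow> (('v + 'v) set, ('e + 'e) set, 'x) hgraph" where
  "gluing G L1 L2 g1 g2 =
     (let LL = hcoprod L1 L2; eps = glue_map G L1 L2 g1 g2 in
      \<lparr> nodes = nodes LL // glue_node_rel G L1 L2 g1 g2,
        edges = edges LL // glue_edge_rel G L1 L2 g1 g2,
        src = (\<lambda>c. map (fst eps) (src LL (SOME e. e \<in> c))),
        tgt = (\<lambda>c. map (fst eps) (tgt LL (SOME e. e \<in> c))),
        lbl = (\<lambda>c. lbl LL (SOME e. e \<in> c)) \<rparr>)"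

definition glued_nodes :: "('w, 'f, 'x) hgraph \<Rightarrow> ('w, 'f, 'v, 'e) hmorph \<Rightarrow> ('w, 'f, 'v, 'e) hmorph
    \<Rightarrow> 'v \<Rightarrow> 'v \<Rightarrow> bool" where
  "glued_nodes G g1 g2 x x' \<longleftrightarrow> (\<exists>y\<in>nodes G. fst g1 y = x \<and> fst g2 y = x')"

definition glued_edges :: "('w, 'f, 'x) hgraph \<Rightarrow> ('w, 'f, 'v, 'e) hmorph \<Rightarrow> ('w, 'f, 'v, 'e) hmorph
    \<Rightarrow> 'e \<Rightarrow> 'e \<Rightarrow> bool" where
  "glued_edges G g1 g2 x x' \<longleftrightarrow> (\<exists>y\<in>edges G. snd g1 y = x \<and> snd g2 y = x')"

definition discrete_on :: "'v set \<Rightarrow> ('v, 'e, 'x) hgraph" where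
  "discrete_on A = \<lparr> nodes = A, edges = {}, src = (\<lambda>_. []), tgt = (\<lambda>_. []), lbl = (\<lambda>_. undefined) \<rparr>"

text \<open>The gluing scheme yields a pre-critical pair: iota1;eps and iota2;eps are mono
  matches and in(S) -> S <- out(S) (the inclusions) is an ma-cospan.  (For
  left-connected systems the two derivations then exist and are unique.)\<close>
definition yields_pre_critical_pair :: "('w, 'f, 'x) hgraph \<Rightarrow> ('v, 'e, 'x) hgraph \<Rightarrow> ('v, 'e, 'x) hgraph
    \<Rightarrow> ('w, 'f, 'v + 'v, 'e + 'e) hmorph \<Rightarrow> ('w, 'f, 'v + 'v, 'e + 'e) hmorph \<Rightarrow> bool" where
  "yields_pre_critical_pair G L1 L2 g1 g2 \<longleftrightarrow>
     (let S = gluing G L1 L2 g1 g2; eps = glue_map G L1 L2 g1 g2 in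
       mono_hom L1 S (inj1 ;; eps) \<and> mono_hom L2 S (inj2 ;; eps) \<and>
       ma_cospan (discrete_on (in_nodes S) :: (('v + 'v) set, ('e + 'e) set, 'x) hgraph) (id, id) S
                 (id, id) (discrete_on (out_nodes S) :: (('v + 'v) set, ('e + 'e) set, 'x) hgraph))"

end

theory Submission
  imports Defs
begin

text \<open>Two glued elements of L1 + L2 are identified by the coequaliser map epsilon. If both lie
  in the same Li and are distinct, then iota_i;epsilon is not injective, so it is not a mono
  match and the gluing cannot yield a pre-critical pair.\<close>

lemma equiv_gen_sym: "(x, y) \<in> equiv_gen A R \<Longrightarrow> (y, x) \<in> equiv_gen A R"
proof -
  have "(R \<union> R\<inverse>)\<inverse> = R \<union> R\<inverse>" by auto
  then have "sym ((R \<union> R\<inverse>)\<^sup>+)"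
    by (metis sym_conv_converse_eq trancl_converse)
  moreover assume "(x, y) \<in> equiv_gen A R"
  ultimately show ?thesis
    unfolding equiv_gen_def by (auto dest: symD)
qed

lemma equiv_gen_trans: "(x, y) \<in> equiv_gen A R \<Longrightarrow> (y, z) \<in> equiv_gen A R \<Longrightarrow> (x, z) \<in> equiv_gen A R"
  unfolding equiv_gen_def by (auto dest: trancl_trans)

lemma equiv_gen_Image_eq:
  assumes "(x, y) \<in> R"
  shows "equiv_gen A R `` {x} = equiv_gen A R `` {y}"
proof -
  from assms have "(x, y) \<in> equiv_gen A R"
    unfolding equiv_gen_def by auto
  then show ?thesis
    by (auto intro: equiv_gen_trans equiv_gen_sym)
qed

lemma glue_map_glued_nodes:
  "glued_nodes G g1 g2 x x' \<Longrightarrow> fst (glue_map G L1 L2 g1 g2) x = fst (glue_map G L1 L2 g1 g2) x'"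
  unfolding glued_nodes_def glue_map_def glue_node_rel_def
  by (auto intro!: equiv_gen_Image_eq)

lemma glue_map_glued_edges:
  "glued_edges G g1 g2 x x' \<Longrightarrow> snd (glue_map G L1 L2 g1 g2) x = snd (glue_map G L1 L2 g1 g2) x'"
  unfolding glued_edges_def glue_map_def glue_edge_rel_def
  by (auto intro!: equiv_gen_Image_eq)

lemma yields_pre_critical_pair_inj_on:
  assumes "yields_pre_critical_pair G L1 L2 g1 g2"
  defines "\<epsilon> \<equiv> glue_map G L1 L2 g1 g2"
  shows "inj_on (fst \<epsilon> \<circ> Inl) (nodes L1)" and "inj_on (fst \<epsilon> \<circ> Inr) (nodes L2)"
    and "inj_on (snd \<epsilon> \<circ> Inl) (edges L1)" and "inj_on (snd \<epsilon> \<circ> Inr) (edges L2)"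
  using assms
  unfolding yields_pre_critical_pair_def mono_hom_def hcomp_def inj1_def inj2_def Let_def
  by auto

lemma yields_pre_critical_pair_glued_nodes_eq:
  assumes "yields_pre_critical_pair G L1 L2 g1 g2"
  shows "\<lbrakk>a \<in> nodes L1; b \<in> nodes L1; glued_nodes G g1 g2 (Inl a) (Inl b)\<rbrakk> \<Longrightarrow> a = b"
    and "\<lbrakk>a \<in> nodes L2; b \<in> nodes L2; glued_nodes G g1 g2 (Inr a) (Inr b)\<rbrakk> \<Longrightarrow> a = b"
  using yields_pre_critical_pair_inj_on(1,2)[OF assms] glue_map_glued_nodes[of G g1 g2 _ _ L1 L2]
  by (metis comp_apply inj_on_def)+

lemma yields_pre_critical_pair_glued_edges_eq:
  assumes "yields_pre_critical_pair G L1 L2 g1 g2"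
  shows "\<lbrakk>a \<in> edges L1; b \<in> edges L1; glued_edges G g1 g2 (Inl a) (Inl b)\<rbrakk> \<Longrightarrow> a = b"
    and "\<lbrakk>a \<in> edges L2; b \<in> edges L2; glued_edges G g1 g2 (Inr a) (Inr b)\<rbrakk> \<Longrightarrow> a = b"
  using yields_pre_critical_pair_inj_on(3,4)[OF assms] glue_map_glued_edges[of G g1 g2 _ _ L1 L2]
  by (metis comp_apply inj_on_def)+

theorem mainTheorem1:
  fixes Sig :: "'x signature"
    and RS :: "('v, 'e, 'x) rule set"
    and r1 r2 :: "('v, 'e, 'x) rule"
    and G :: "('w, 'f, 'x) hgraph"
    and g1 g2 :: "('w, 'f, 'v + 'v, 'e + 'e) hmorph"
  assumes "left_connected_system Sig RS"
    and "r1 \<in> RS" and "r2 \<in> RS"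
    and "gluing_scheme Sig G (lhs r1) (lhs r2) g1 g2"
  shows
    "(((\<exists>a b. a \<in> nodes (lhs r1) \<and> b \<in> nodes (lhs r1) \<and> a \<noteq> b \<and> glued_nodes G g1 g2 (Inl a) (Inl b)) \<or>
      (\<exists>a b. a \<in> nodes (lhs r2) \<and> b \<in> nodes (lhs r2) \<and> a \<noteq> b \<and> glued_nodes G g1 g2 (Inr a) (Inr b)))
     \<longrightarrow> \<not> yields_pre_critical_pair G (lhs r1) (lhs r2) g1 g2) \<and>
    (((\<exists>a b. a \<in> edges (lhs r1) \<and> b \<in> edges (lhs r1) \<and> a \<noteq> b \<and> glued_edges G g1 g2 (Inl a) (Inl b)) \<or>
      (\<exists>a b. a \<in> edges (lhs r2) \<and> b \<in> edges (lhs r2) \<and> a \<noteq> b \<and> glued_edges G g1 g2 (Inr a) (Inr b)))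
     \<longrightarrow> \<not> yields_pre_critical_pair G (lhs r1) (lhs r2) g1 g2)"
  by (meson yields_pre_critical_pair_glued_nodes_eq yields_pre_critical_pair_glued_edges_eq)

end
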